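(* The principle $( * )$ implies the principle $(\maltese)$ (both defined below).
   Context: $[\theta]^{\le\aleph_0}$: countable subsets of $\theta$; $x\subseteq^*y$ iff $x\setminus y$ finite; $\downarrow\mathcal H=\bigcup_{x\in\mathcal H}\mathcal P(x)$; a set is locally in $\mathcal K$ if all its countable subsets are in $\mathcal K$; $B$ is orthogonal to $\mathcal H$ if $B\cap x$ is finite for every $x\in\mathcal H$; directed means every two elements have an upper bound, $\sigma$-directed means every countable subset has an upper bound. $( * )$: for every ordinal $\theta$ and every $\sigma$-directed subfamily $\mathcal H$ of $([\theta]^{\le\aleph_0},\subseteq^* )$, either there is an uncountable $X\subseteq\theta$ locally in $\downarrow\mathcal H$, or $\theta$ is a union of countably many sets orthogonal to $\mathcal H$. A lower set $\mathcal L$ of a poset is $\lambda$-generated if some $\mathcal G\subseteq\mathcal L$ with $|\mathcal G|\le\lambda$ has every element of $\mathcal L$ below some element of $\mathcal G$. $\mathfrak p$ is the least size of a family $\mathcal A\subseteq[\omega]^{\aleph_0}$ with the finite intersection property (finite nonempty subfamilies have infinite intersection) having no infinite $\subseteq^*$-lower bound; $\mathfrak b$ is the least size of a subset of $\omega^\omega$ unbounded under eventual domination. $(\maltese)$: for every ordinal $\theta$ and every directed subfamily $\mathcal H$ of $([\theta]^{\le\aleph_0},\subseteq^* )$ such that $\downarrow\mathcal H$ is generated (every member is a subset of a member of $\mathcal B$) by some $\mathcal B\subseteq\mathcal H$ with $|\mathcal B|<\mathfrak b$, and such that for every countable $a\subseteq\theta$ the lower set $\downarrow\mathcal H\cap\mathcal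 P(a)$ of $([\theta]^{\le\aleph_0},\subseteq)$ is generated by fewer than $\mathfrak p$ elements, either (1) $\theta$ has a countable decomposition into singletons and sets locally in $\downarrow\mathcal H$, or (2) there is an uncountable subset of $\theta$ orthogonal to $\mathcal H$. *)

theory Defs
  imports Main "HOL-Library.Countable_Set"
begin

definition ctbl_subsets :: "'a set \<Rightarrow> 'a set set" where
  "ctbl_subsets \<theta> = {x. x \<subseteq> \<theta> \<and> countable x}"

definition almost_subset :: "'a set \<Rightarrow> 'a set \<Rightarrow> bool" where
  "almost_subset x y \<longleftrightarrow> finite (x - y)"

definition down :: "'a set set \<Rightarrow> 'a set set" where
  "down H = (\<Union>x\<in>H. Pow x)"

definition locally_in :: "'a set \<Rightarrow> 'a set set \<Rightarrow> bool" where
  "locally_in X K \<longleftrightarrow> (\<forall>y. y \<subseteq> X \<and> countable y \<longrightarrow> y \<in> K)"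

definition orthogonal :: "'a set \<Rightarrow> 'a set set \<Rightarrow> bool" where
  "orthogonal B H \<longleftrightarrow> (\<forall>x\<in>H. finite (B \<inter> x))"

definition directed_ae :: "'a set set \<Rightarrow> bool" where
  "directed_ae H \<longleftrightarrow> (\<forall>x\<in>H. \<forall>y\<in>H. \<exists>z\<in>H. almost_subset x z \<and> almost_subset y z)"

definition sigma_directed_ae :: "'a set set \<Rightarrow> bool" where
  "sigma_directed_ae H \<longleftrightarrow>
     (\<forall>C. C \<subseteq> H \<and> countable C \<longrightarrow> (\<exists>z\<in>H. \<forall>x\<in>C. almost_subset x z))"

definition eventually_dominated :: "(nat \<Rightarrow> nat) \<Rightarrow> (nat \<Rightarrow> nat) \<Rightarrow> bool" where
  "eventually_dominated f g \<longleftrightarrow> (\<exists>N. \<forall>n\<ge>N. f n \<le> g n)"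

definition unbounded_family :: "(nat \<Rightarrow> nat) set \<Rightarrow> bool" where
  "unbounded_family F \<longleftrightarrow> \<not> (\<exists>g. \<forall>f\<in>F. eventually_dominated f g)"

text \<open>\<open>|S| < \<bb>\<close>: |S| is below the size of every unbounded family,
  i.e. below the least such size.\<close>
definition less_than_b :: "'b set \<Rightarrow> bool" where
  "less_than_b S \<longleftrightarrow> (\<forall>F. unbounded_family F \<longrightarrow> ordLess2 (card_of S) (card_of F))"

text \<open>Families witnessing \<open>\<pp>\<close>: infinite subsets of \<omega> with the (strong) finite
  intersection property and no infinite almost-lower bound.\<close>
definition p_family :: "nat set set \<Rightarrow> bool" where
  "p_family A \<longleftrightarrow>
     (\<forall>a\<in>A. infinite a) \<and>
     (\<forall>F. F \<subseteq> A \<and> finite F \<and> F \<noteq> {} \<longrightarrow> infinite (\<Inter>F)) \<and>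
     \<not> (\<exists>y. infinite y \<and> (\<forall>a\<in>A. almost_subset y a))"

definition less_than_p :: "'b set \<Rightarrow> bool" where
  "less_than_p S \<longleftrightarrow> (\<forall>A. p_family A \<longrightarrow> ordLess2 (card_of S) (card_of A))"

definition principle_star :: "'a itself \<Rightarrow> bool" where
  "principle_star _ \<longleftrightarrow>
    (\<forall>(\<theta>::'a set) H. H \<subseteq> ctbl_subsets \<theta> \<and> sigma_directed_ae H \<longrightarrow>
       (\<exists>X. X \<subseteq> \<theta> \<and> uncountable X \<and> locally_in X (down H)) \<or>
       (\<exists>D. countable D \<and> \<Union>D = \<theta> \<and> (\<forall>d\<in>D. orthogonal d H)))"

definition principle_maltese :: "'a itself \<Rightarrow> bool" where
  "principle_maltese _ \<longleftrightarrow>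
    (\<forall>(\<theta>::'a set) H.
       H \<subseteq> ctbl_subsets \<theta> \<and> directed_ae H \<and>
       (\<exists>B. B \<subseteq> H \<and> less_than_b B \<and> (\<forall>x\<in>down H. \<exists>b\<in>B. x \<subseteq> b)) \<and>
       (\<forall>a. a \<subseteq> \<theta> \<and> countable a \<longrightarrow>
          (\<exists>G. G \<subseteq> down H \<inter> Pow a \<and> less_than_p G \<and>
               (\<forall>x\<in>down H \<inter> Pow a. \<exists>g\<in>G. x \<subseteq> g)))
     \<longrightarrow>
       (\<exists>D. countable D \<and> \<Union>D = \<theta> \<and>
            (\<forall>d\<in>D. (\<exists>t. d = {t}) \<or> locally_in d (down H))) \<or>
       (\<exists>X. X \<subseteq> \<theta> \<and> uncountable X \<and> orthogonal X H))"

end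

theory Submission
  imports Defs "HOL-Library.Disjoint_Sets"
begin

(* Let I be the family of countable subsets of theta orthogonal to H. As the set B that generates
   down H has fewer than b elements, I is sigma-directed, so (star) applies to I. An uncountable
   set locally in down I is orthogonal to H. Otherwise theta is a countable union of sets d
   orthogonal to I. Then every countable c contained in d is almost contained in a member of H:
   if not, the complements in c of fewer than p generators of down H restricted to c have an
   infinite pseudo-intersection, and that is an infinite subset of d orthogonal to H. An
   omega-recursion now shows that d is locally in down H after removing a countable set, whose
   points become singletons of the decomposition. *)

definition orthogonal_ideal :: "'a set \<Rightarrow> 'a set set \<Rightarrow> 'a set set" where
  "orthogonal_ideal \<theta> H = {y. y \<subseteq> \<theta> \<and> countable y \<and> orthogonal y H}"

lemma almost_subset_trans: "almost_subset x y \<Longrightarrow> almost_subset y z \<Longrightarrow> almost_subset x z"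
  unfolding almost_subset_def by (rule finite_subset[of _ "(x - y) \<union> (y - z)"]) auto

lemma directed_ae_finite_upper_bound:
  assumes "directed_ae H" "H \<noteq> {}" "finite S" "S \<subseteq> H"
  shows "\<exists>z\<in>H. \<forall>x\<in>S. almost_subset x z"
  using assms(3,4)
proof (induction S rule: finite_induct)
  case empty
  then show ?case using assms(2) by auto
next
  case (insert a S)
  then obtain z where z: "z \<in> H" "\<forall>x\<in>S. almost_subset x z" by auto
  with assms(1) insert.prems obtain w where "w \<in> H" "almost_subset a w" "almost_subset z w"
    unfolding directed_ae_def by blast
  then show ?case using z almost_subset_trans by blast
qed

lemma orthogonal_if_cofinal:
  assumes "orthogonal z B" "\<forall>x\<in>H. \<exists>b\<in>B. x \<subseteq> b"
  shows "orthogonal z H"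
  using assms unfolding orthogonal_def by (meson finite_subset inf_mono order_refl)

lemma less_than_b_imp_dominated:
  assumes "less_than_b B"
  shows "\<exists>g. \<forall>b\<in>B. eventually_dominated (f b) g"
proof -
  have "\<not> unbounded_family (f ` B)"
    using assms card_of_image[of f B] not_ordLess_ordLeq unfolding less_than_b_def by blast
  then show ?thesis unfolding unbounded_family_def by blast
qed

lemma less_than_p_imp_not_p_family_image:
  assumes "less_than_p G"
  shows "\<not> p_family (f ` G)"
  using assms card_of_image[of f G] not_ordLess_ordLeq unfolding less_than_p_def by blast

lemma almost_upper_bound_orthogonal:
  fixes Y :: "nat \<Rightarrow> 'a set"
  assumes B: "less_than_b B"
    and Y: "\<And>n. countable (Y n)" "\<And>n b. b \<in> B \<Longrightarrow> finite (Y n \<inter> b)"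
  shows "\<exists>z\<subseteq>(\<Union>n. Y n). orthogonal z B \<and> (\<forall>n. almost_subset (Y n) z)"
proof -
  define a where "a = (\<Union>n. Y n)"
  define e where "e = to_nat_on a"
  have inj: "inj_on e a" unfolding e_def a_def using Y(1) by (intro inj_on_to_nat_on countable_UN) auto
  define f where "f b n = Max (insert 0 (e ` (Y n \<inter> b)))" for b n
  have f_ge: "e t \<le> f b n" if "b \<in> B" "t \<in> Y n \<inter> b" for b n t
    unfolding f_def using Y(2)[OF that(1)] that(2) by (intro Max_ge) auto
  obtain g where g: "\<forall>b\<in>B. eventually_dominated (f b) g"
    using less_than_b_imp_dominated[OF B] by blast
  \<comment> \<open>beyond some \<open>N\<close>, \<open>g n\<close> bounds the codes of \<open>Y n \<inter> b\<close>, so \<open>z\<close> meets \<open>b\<close> only in \<open>Y 0, \<dots>, Y (N - 1)\<close>\<close>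
  define z where "z = {t. \<exists>n. t \<in> Y n \<and> g n < e t}"
  have "orthogonal z B" unfolding orthogonal_def
  proof
    fix b assume b: "b \<in> B"
    then obtain N where N: "\<forall>n\<ge>N. f b n \<le> g n" using g unfolding eventually_dominated_def by blast
    have "z \<inter> b \<subseteq> (\<Union>n<N. Y n \<inter> b)"
    proof
      fix t assume "t \<in> z \<inter> b"
      then obtain n where n: "t \<in> Y n" "g n < e t" "t \<in> b" unfolding z_def by blast
      with f_ge[OF b] N have "n < N" by (meson IntI leD le_less_trans not_le)
      with n show "t \<in> (\<Union>n<N. Y n \<inter> b)" by blast
    qed
    then show "finite (z \<inter> b)" using Y(2)[OF b] by (meson finite_UN_I finite_lessThan finite_subset)
  qed
  moreover have "almost_subset (Y n) z" for n
  proof -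
    have "Y n - z \<subseteq> e -` {..g n} \<inter> a" unfolding z_def a_def by auto
    then show ?thesis
      unfolding almost_subset_def using finite_vimage_IntI[OF finite_atMost inj] finite_subset by blast
  qed
  moreover have "z \<subseteq> a" unfolding z_def a_def by auto
  ultimately show ?thesis unfolding a_def by blast
qed

lemma sigma_directed_orthogonal_ideal:
  assumes "B \<subseteq> H" "less_than_b B" "\<forall>x\<in>H. \<exists>b\<in>B. x \<subseteq> b"
  shows "sigma_directed_ae (orthogonal_ideal \<theta> H)"
  unfolding sigma_directed_ae_def
proof (intro allI impI, elim conjE)
  fix C assume C: "C \<subseteq> orthogonal_ideal \<theta> H" "countable C"
  show "\<exists>z\<in>orthogonal_ideal \<theta> H. \<forall>x\<in>C. almost_subset x z"
  proof (cases "C = {}")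
    case True
    then show ?thesis by (auto simp: orthogonal_ideal_def orthogonal_def)
  next
    case False
    then have range_C: "range (from_nat_into C) = C" using C(2) by simp
    have "from_nat_into C n \<in> orthogonal_ideal \<theta> H" for n
      using from_nat_into[OF False] C(1) by blast
    then have Y: "countable (from_nat_into C n)" "b \<in> B \<Longrightarrow> finite (from_nat_into C n \<inter> b)" for n b
      using assms(1) unfolding orthogonal_ideal_def orthogonal_def by blast+
    have "\<exists>z\<subseteq>(\<Union>n. from_nat_into C n). orthogonal z B \<and> (\<forall>n. almost_subset (from_nat_into C n) z)"
      by (rule almost_upper_bound_orthogonal[OF assms(2) Y(1) Y(2)])
    then obtain z where z: "z \<subseteq> \<Union>C" "orthogonal z B" "\<forall>n. almost_subset (from_nat_into C n) z"
      using range_C by auto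
    have "countable (\<Union>C)" "\<Union>C \<subseteq> \<theta>"
      using C countable_UN[of C "\<lambda>y. y"] unfolding orthogonal_ideal_def by auto
    with z have "z \<in> orthogonal_ideal \<theta> H"
      using orthogonal_if_cofinal[OF z(2) assms(3)] countable_subset
      unfolding orthogonal_ideal_def by blast
    with z(3) range_C show ?thesis by (metis rangeE)
  qed
qed

lemma orthogonal_if_locally_in_orthogonal_ideal:
  assumes "H \<subseteq> ctbl_subsets \<theta>" "locally_in X (down (orthogonal_ideal \<theta> H))"
  shows "orthogonal X H"
  unfolding orthogonal_def
proof
  fix x assume x: "x \<in> H"
  then have "countable x" using assms(1) unfolding ctbl_subsets_def by blast
  then have "countable (X \<inter> x)" by (rule countable_subset[OF Int_lower2])
  then have "X \<inter> x \<in> down (orthogonal_ideal \<theta> H)" using assms(2) unfolding locally_in_def by blast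
  then obtain y where y: "y \<in> orthogonal_ideal \<theta> H" "X \<inter> x \<subseteq> y" unfolding down_def by blast
  then have "finite (y \<inter> x)" using x unfolding orthogonal_ideal_def orthogonal_def by blast
  moreover have "X \<inter> x \<subseteq> y \<inter> x" using y(2) by blast
  ultimately show "finite (X \<inter> x)" by (rule finite_subset[rotated])
qed

lemma almost_subset_image_iff:
  assumes "inj_on e c" "y \<subseteq> c" "a \<subseteq> c"
  shows "almost_subset (e ` y) (e ` a) \<longleftrightarrow> almost_subset y a"
proof -
  have "e ` y - e ` a = e ` (y - a)"
    using inj_on_image_set_diff[OF assms(1)] assms(2,3) by blast
  moreover have "inj_on e (y - a)" using assms(1) by (rule inj_on_subset) (use assms(2) in blast)
  ultimately show ?thesis unfolding almost_subset_def by (simp add: finite_image_iff)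
qed

lemma p_family_bij_image:
  fixes e :: "'a \<Rightarrow> nat"
  assumes e: "bij_betw e c UNIV"
    and A: "\<forall>a\<in>A. a \<subseteq> c \<and> infinite a"
    and fip: "\<forall>F. F \<subseteq> A \<and> finite F \<and> F \<noteq> {} \<longrightarrow> infinite (\<Inter>F)"
    and no_bound: "\<forall>y\<subseteq>c. infinite y \<longrightarrow> (\<exists>a\<in>A. \<not> almost_subset y a)"
  shows "p_family ((`) e ` A)"
proof -
  have inj: "inj_on e c" and surj: "e ` c = UNIV" using e by (simp_all add: bij_betw_def)
  have infinite_image: "infinite (e ` a)" if "a \<subseteq> c" "infinite a" for a
    using that finite_image_iff inj_on_subset[OF inj] by metis
  have "\<forall>a\<in>(`) e ` A. infinite a" using A infinite_image by blast
  moreover have "\<forall>F. F \<subseteq> (`) e ` A \<and> finite F \<and> F \<noteq> {} \<longrightarrow> infinite (\<Inter>F)"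
  proof (intro allI impI, elim conjE)
    fix F assume F: "F \<subseteq> (`) e ` A" "finite F" "F \<noteq> {}"
    obtain F' where F': "F' \<subseteq> A" "finite F'" "F = (`) e ` F'"
      using finite_subset_image[OF F(2,1)] by blast
    with F(3) obtain j where "j \<in> F'" by blast
    then have "\<Inter>F = e ` \<Inter>F'"
      using image_INT[OF inj, of F' "\<lambda>a. a" j] F'(1,3) A by auto
    moreover have "infinite (\<Inter>F')" "\<Inter>F' \<subseteq> c"
      using fip F' \<open>j \<in> F'\<close> A by blast+
    ultimately show "infinite (\<Inter>F)" using infinite_image by simp
  qed
  moreover have "\<nexists>y. infinite y \<and> (\<forall>a\<in>(`) e ` A. almost_subset y a)"
  proof (intro notI, elim exE conjE)
    fix y assume "infinite y" "\<forall>a\<in>(`) e ` A. almost_subset y a"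
    then have y: "infinite y" "\<forall>a\<in>A. almost_subset y (e ` a)" by blast+
    define y' where "y' = inv_into c e ` y"
    have "y' \<subseteq> c" unfolding y'_def using surj by (auto intro: inv_into_into)
    have "e ` y' = y" unfolding y'_def using image_inv_into_cancel[OF surj] by blast
    with y(1) have "infinite y'" by blast
    with \<open>y' \<subseteq> c\<close> obtain a where a: "a \<in> A" "\<not> almost_subset y' a" using no_bound by blast
    moreover have "almost_subset y' a"
      using y(2) a(1) A \<open>e ` y' = y\<close> almost_subset_image_iff[OF inj \<open>y' \<subseteq> c\<close>] by blast
    ultimately show False by blast
  qed
  ultimately show ?thesis unfolding p_family_def by (intro conjI)
qed

lemma infinite_Diff_Union_if_not_almost_subset:
  assumes dir: "directed_ae H" and "H \<noteq> {}" and S: "finite S" "\<forall>g\<in>S. \<exists>x\<in>H. g \<subseteq> x"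
    and none: "\<forall>x\<in>H. \<not> almost_subset c x"
  shows "infinite (c - \<Union>S)"
proof -
  have "\<forall>g\<in>S. \<exists>x. x \<in> H \<and> g \<subseteq> x" using S(2) by blast
  then obtain xg where xg: "\<forall>g\<in>S. xg g \<in> H \<and> g \<subseteq> xg g" by (rule bchoice[elim_format]) blast
  then have "finite (xg ` S)" "xg ` S \<subseteq> H" using S(1) by auto
  then obtain z where z: "z \<in> H" "\<forall>x\<in>xg ` S. almost_subset x z"
    using directed_ae_finite_upper_bound[OF dir \<open>H \<noteq> {}\<close>] by blast
  have "finite (\<Union>g\<in>S. xg g - z)"
    using S(1) z(2) unfolding almost_subset_def by (intro finite_UN_I) auto
  moreover have "infinite (c - z)" using none z(1) unfolding almost_subset_def by blast
  ultimately have "infinite ((c - z) - (\<Union>g\<in>S. xg g - z))" by (rule Diff_infinite_finite)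
  moreover have "(c - z) - (\<Union>g\<in>S. xg g - z) \<subseteq> c - \<Union>S" using xg by blast
  ultimately show ?thesis using infinite_super by blast
qed

lemma orthogonal_if_almost_subset_complements:
  assumes "y \<subseteq> c" "\<forall>x\<in>down H \<inter> Pow c. \<exists>g\<in>G. x \<subseteq> g"
    and "\<forall>g\<in>G. almost_subset y (c - g)"
  shows "orthogonal y H"
  unfolding orthogonal_def
proof
  fix x assume "x \<in> H"
  then obtain g where "g \<in> G" "c \<inter> x \<subseteq> g"
    using assms(2) unfolding down_def by blast
  then have "y \<inter> x \<subseteq> y - (c - g)" using assms(1) by blast
  moreover have "finite (y - (c - g))" using assms(3) \<open>g \<in> G\<close> unfolding almost_subset_def by blast
  ultimately show "finite (y \<inter> x)" by (rule finite_subset)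
qed

lemma almost_subset_member_if_no_infinite_orthogonal:
  assumes dir: "directed_ae H" and "H \<noteq> {}" and c: "countable c"
    and G: "G \<subseteq> down H" "less_than_p G" "\<forall>x\<in>down H \<inter> Pow c. \<exists>g\<in>G. x \<subseteq> g"
    and no_orth: "\<forall>y\<subseteq>c. infinite y \<longrightarrow> \<not> orthogonal y H"
  shows "\<exists>x\<in>H. almost_subset c x"
proof (rule ccontr)
  assume "\<not> ?thesis"
  then have none: "\<forall>x\<in>H. \<not> almost_subset c x" by blast
  then have "infinite c" using \<open>H \<noteq> {}\<close> unfolding almost_subset_def by blast
  then obtain e :: "'a \<Rightarrow> nat" where e: "bij_betw e c UNIV"
    using to_nat_on_infinite[OF c] by blast
  have G_below: "\<exists>x\<in>H. g \<subseteq> x" if "g \<in> G" for g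
    using G(1) that unfolding down_def by blast
  \<comment> \<open>the complements \<open>c - g\<close> would form a \<open>\<pp>\<close>-family with at most \<open>|G| < \<pp>\<close> members\<close>
  have "p_family ((`) e ` (\<lambda>g. c - g) ` G)"
  proof (rule p_family_bij_image[OF e])
    have "infinite (c - g)" if g: "g \<in> G" for g
    proof -
      obtain x where "x \<in> H" "g \<subseteq> x" using G_below[OF g] by blast
      moreover from this(2) have "c - x \<subseteq> c - g" by blast
      ultimately show ?thesis using none unfolding almost_subset_def using finite_subset by blast
    qed
    then show "\<forall>a\<in>(\<lambda>g. c - g) ` G. a \<subseteq> c \<and> infinite a" by blast
  next
    show "\<forall>F. F \<subseteq> (\<lambda>g. c - g) ` G \<and> finite F \<and> F \<noteq> {} \<longrightarrow> infinite (\<Inter>F)"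
    proof (intro allI impI, elim conjE)
      fix F assume F: "F \<subseteq> (\<lambda>g. c - g) ` G" "finite F" "F \<noteq> {}"
      obtain S where S: "S \<subseteq> G" "finite S" "F = (\<lambda>g. c - g) ` S"
        using finite_subset_image[OF F(2,1)] by blast
      with F(3) have "\<Inter>F = c - \<Union>S" by blast
      moreover have "\<forall>g\<in>S. \<exists>x\<in>H. g \<subseteq> x" using S(1) G_below by blast
      ultimately show "infinite (\<Inter>F)"
        using infinite_Diff_Union_if_not_almost_subset[OF dir \<open>H \<noteq> {}\<close> S(2) _ none] by simp
    qed
  next
    show "\<forall>y\<subseteq>c. infinite y \<longrightarrow> (\<exists>a\<in>(\<lambda>g. c - g) ` G. \<not> almost_subset y a)"
    proof (intro allI impI, rule ccontr)
      fix y assume y: "y \<subseteq> c" "infinite y" and "\<not> (\<exists>a\<in>(\<lambda>g. c - g) ` G. \<not> almost_subset y a)"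
      then have "\<forall>g\<in>G. almost_subset y (c - g)" by blast
      then have "orthogonal y H" by (rule orthogonal_if_almost_subset_complements[OF y(1) G(3)])
      with y no_orth show False by blast
    qed
  qed
  then have "p_family ((\<lambda>g. e ` (c - g)) ` G)" by (simp only: image_image)
  with less_than_p_imp_not_p_family_image[OF G(2)] show False by blast
qed

lemma Union_disjoint_family_not_almost_subset:
  fixes P :: "nat \<Rightarrow> 'a set"
  assumes "disjoint_family P" "\<And>n. \<not> P n \<subseteq> x"
  shows "\<not> almost_subset (\<Union>n. P n) x"
proof
  assume almost: "almost_subset (\<Union>n. P n) x"
  have "\<forall>n. \<exists>t. t \<in> P n - x" using assms(2) by blast
  then obtain p where p: "\<forall>n. p n \<in> P n - x" by (rule choice[elim_format]) blast
  have "inj p"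
  proof (rule injI, rule ccontr)
    fix m n assume eq: "p m = p n" and "m \<noteq> n"
    have "p m \<in> P m \<inter> P n" using p[rule_format, of m] p[rule_format, of n] eq by simp
    with disjoint_family_onD[OF assms(1) _ _ \<open>m \<noteq> n\<close>] show False by blast
  qed
  then have "infinite (range p)" by (rule range_inj_infinite)
  moreover have "range p \<subseteq> (\<Union>n. P n) - x" using p by blast
  ultimately show False using almost unfolding almost_subset_def using finite_subset by blast
qed

lemma locally_in_down_Diff_countable:
  assumes "\<forall>U. U \<subseteq> d \<and> countable U \<longrightarrow> (\<exists>x\<in>H. almost_subset U x)"
  shows "\<exists>R\<subseteq>d. countable R \<and> locally_in (d - R) (down H)"
proof (rule ccontr)
  assume "\<not> ?thesis"
  then have "\<exists>c. c \<subseteq> d - R \<and> countable c \<and> c \<notin> down H" if "R \<subseteq> d" "countable R" for R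
    using that unfolding locally_in_def by blast
  then obtain new where new: "\<And>R. R \<subseteq> d \<Longrightarrow> countable R \<Longrightarrow>
      new R \<subseteq> d - R \<and> countable (new R) \<and> new R \<notin> down H"
    by metis
  define S where "S = rec_nat {} (\<lambda>_ R. R \<union> new R)"
  have S_Suc: "S (Suc n) = S n \<union> new (S n)" for n by (simp add: S_def)
  have S: "S n \<subseteq> d \<and> countable (S n)" for n
  proof (induction n)
    case 0
    then show ?case by (simp add: S_def)
  next
    case (Suc n)
    then show ?case using new[of "S n"] unfolding S_Suc by auto
  qed
  define P where "P n = new (S n)" for n
  have P: "P n \<subseteq> d - S n \<and> countable (P n) \<and> P n \<notin> down H" for n
    unfolding P_def using S[of n] by (intro new) auto
  have S_mono: "S m \<subseteq> S n" if "m \<le> n" for m n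
    using lift_Suc_mono_le[of S, OF _ that] by (simp add: S_Suc)
  have disjoint: "P m \<inter> P n = {}" if "m < n" for m n
  proof -
    have "P m \<subseteq> S (Suc m)" unfolding S_Suc P_def by blast
    also have "\<dots> \<subseteq> S n" using S_mono that by simp
    finally show ?thesis using P[of n] by blast
  qed
  have "disjoint_family P" unfolding disjoint_family_on_def
  proof (intro ballI impI)
    fix m n :: nat assume "m \<noteq> n"
    then consider "m < n" | "n < m" by linarith
    then show "P m \<inter> P n = {}" using disjoint by cases blast+
  qed
  have "(\<Union>n. P n) \<subseteq> d" "countable (\<Union>n. P n)" using P by blast+
  then obtain x where x: "x \<in> H" "almost_subset (\<Union>n. P n) x" using assms by blast
  moreover have "\<not> P n \<subseteq> x" for n
    using P[of n] x(1) unfolding down_def by blast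
  ultimately show False using Union_disjoint_family_not_almost_subset[OF \<open>disjoint_family P\<close>] by blast
qed

lemma locally_in_down_Diff_countable_if_orthogonal:
  assumes dir: "directed_ae H" and "H \<noteq> {}"
    and gen: "\<forall>a. a \<subseteq> \<theta> \<and> countable a \<longrightarrow>
       (\<exists>G. G \<subseteq> down H \<inter> Pow a \<and> less_than_p G \<and> (\<forall>x\<in>down H \<inter> Pow a. \<exists>g\<in>G. x \<subseteq> g))"
    and d: "d \<subseteq> \<theta>" "orthogonal d (orthogonal_ideal \<theta> H)"
  shows "\<exists>R\<subseteq>d. countable R \<and> locally_in (d - R) (down H)"
proof (rule locally_in_down_Diff_countable, intro allI impI, elim conjE)
  fix U assume U: "U \<subseteq> d" "countable U"
  with d(1) have "U \<subseteq> \<theta> \<and> countable U" by blast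
  then have "\<exists>G. G \<subseteq> down H \<inter> Pow U \<and> less_than_p G \<and> (\<forall>x\<in>down H \<inter> Pow U. \<exists>g\<in>G. x \<subseteq> g)"
    by (rule gen[rule_format])
  then obtain G where G: "G \<subseteq> down H \<inter> Pow U" "less_than_p G" "\<forall>x\<in>down H \<inter> Pow U. \<exists>g\<in>G. x \<subseteq> g"
    by (elim exE conjE)
  have no_orthogonal: "\<forall>y\<subseteq>U. infinite y \<longrightarrow> \<not> orthogonal y H"
  proof (intro allI impI notI)
    fix y assume y: "y \<subseteq> U" "infinite y" and "orthogonal y H"
    moreover have "y \<subseteq> \<theta>" using y(1) U(1) d(1) by blast
    moreover have "countable y" using countable_subset[OF y(1) U(2)] .
    ultimately have "y \<in> orthogonal_ideal \<theta> H" unfolding orthogonal_ideal_def by simp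
    then have "finite (d \<inter> y)" using d(2) unfolding orthogonal_def by blast
    moreover have "d \<inter> y = y" using y(1) U(1) by blast
    ultimately show False using y(2) by simp
  qed
  from G(1) have "G \<subseteq> down H" by simp
  then show "\<exists>x\<in>H. almost_subset U x"
    by (rule almost_subset_member_if_no_infinite_orthogonal[OF dir \<open>H \<noteq> {}\<close> U(2) _ G(2,3) no_orthogonal])
qed

lemma countable_decomposition_singletons_locally_in:
  assumes "countable D" "\<Union>D = \<theta>"
    and "\<And>d. d \<in> D \<Longrightarrow> \<exists>R\<subseteq>d. countable R \<and> locally_in (d - R) K"
  shows "\<exists>D'. countable D' \<and> \<Union>D' = \<theta> \<and> (\<forall>d\<in>D'. (\<exists>t. d = {t}) \<or> locally_in d K)"
proof -
  obtain R where R: "\<And>d. d \<in> D \<Longrightarrow> R d \<subseteq> d \<and> countable (R d) \<and> locally_in (d - R d) K"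
    using assms(3) by metis
  let ?D' = "(\<lambda>d. d - R d) ` D \<union> (\<lambda>t. {t}) ` (\<Union>d\<in>D. R d)"
  have "countable ?D'" using assms(1) R by auto
  moreover have "\<Union>?D' = \<theta>"
  proof
    show "\<Union>?D' \<subseteq> \<theta>" using assms(2) R by blast
    show "\<theta> \<subseteq> \<Union>?D'"
    proof
      fix t assume "t \<in> \<theta>"
      then obtain d where "d \<in> D" "t \<in> d" using assms(2) by blast
      then show "t \<in> \<Union>?D'" by (cases "t \<in> R d") blast+
    qed
  qed
  moreover have "(\<exists>t. e = {t}) \<or> locally_in e K" if "e \<in> ?D'" for e
  proof -
    from that consider d where "d \<in> D" "e = d - R d" | t where "e = {t}" by blast
    then show ?thesis using R by cases blast+
  qed
  ultimately show ?thesis by (intro exI[of _ ?D']) blast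
qed

theorem theorem5p1:
  assumes "principle_star TYPE('a)"
  shows "principle_maltese TYPE('a)"
  unfolding principle_maltese_def
proof (intro allI impI, elim conjE exE)
  fix \<theta> :: "'a set" and H B
  assume H: "H \<subseteq> ctbl_subsets \<theta>" and dir: "directed_ae H"
    and B: "B \<subseteq> H" "less_than_b B" "\<forall>x\<in>down H. \<exists>b\<in>B. x \<subseteq> b"
    and gen: "\<forall>a. a \<subseteq> \<theta> \<and> countable a \<longrightarrow>
       (\<exists>G. G \<subseteq> down H \<inter> Pow a \<and> less_than_p G \<and> (\<forall>x\<in>down H \<inter> Pow a. \<exists>g\<in>G. x \<subseteq> g))"
  let ?I = "orthogonal_ideal \<theta> H"
  show "(\<exists>D. countable D \<and> \<Union>D = \<theta> \<and> (\<forall>d\<in>D. (\<exists>t. d = {t}) \<or> locally_in d (down H))) \<or>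
        (\<exists>X. X \<subseteq> \<theta> \<and> uncountable X \<and> orthogonal X H)"
  proof (cases "H = {}")
    case True
    show ?thesis
    proof (cases "countable \<theta>")
      case True
      then show ?thesis by (intro disjI1 exI[of _ "(\<lambda>t. {t}) ` \<theta>"]) auto
    next
      case False
      with \<open>H = {}\<close> show ?thesis unfolding orthogonal_def by blast
    qed
  next
    case False
    have "\<forall>x\<in>H. \<exists>b\<in>B. x \<subseteq> b" using B(3) unfolding down_def by blast
    then have "sigma_directed_ae ?I" by (rule sigma_directed_orthogonal_ideal[OF B(1,2)])
    moreover have "?I \<subseteq> ctbl_subsets \<theta>" unfolding orthogonal_ideal_def ctbl_subsets_def by blast
    ultimately have "?I \<subseteq> ctbl_subsets \<theta> \<and> sigma_directed_ae ?I" by blast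
    from assms[unfolded principle_star_def, rule_format, OF this]
    consider X where "X \<subseteq> \<theta>" "uncountable X" "locally_in X (down ?I)"
      | D where "countable D" "\<Union>D = \<theta>" "\<forall>d\<in>D. orthogonal d ?I"
      by blast
    then show ?thesis
    proof cases
      case (1 X)
      then have "orthogonal X H" by (intro orthogonal_if_locally_in_orthogonal_ideal[OF H])
      with 1(1,2) show ?thesis by blast
    next
      case (2 D)
      have "\<exists>R\<subseteq>d. countable R \<and> locally_in (d - R) (down H)" if "d \<in> D" for d
        using that 2 by (intro locally_in_down_Diff_countable_if_orthogonal[OF dir False gen]) auto
      then show ?thesis by (intro disjI1 countable_decomposition_singletons_locally_in[OF 2(1,2)])
    qed
  qed
qed

end
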